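(* (a) There are absolute constants $C,C'>0$ such that for every $n\ge 2$ and every directed graph $G_0$ on $n$ nodes, the directed two-hop walk process started from $G_0$ has terminated by round $\lceil Cn^2\log n\rceil$ with probability at least $1-C'/n$. (b) There is an absolute constant $c>0$ and, for infinitely many $n$, a weakly connected directed graph $G_0$ on $n$ nodes such that the probability that the directed two-hop walk process started from $G_0$ has terminated by round $\lfloor c\,n^2\ln n\rfloor$ tends to $0$ as $n\to\infty$.
   Context: Directed two-hop walk process: $G_0$ is a simple directed graph (no loops, no parallel arcs) on an $n$-node vertex set $V$. Given $G_t$, in round $t$ every node $x$ with at least one out-neighbor independently picks an out-neighbor $v$ of $x$ in $G_t$ uniformly at random and then, if $v$ has an out-neighbor, an out-neighbor $w$ of $v$ in $G_t$ uniformly at random, and the arc $(x,w)$ is added (nothing happens if $w=x$ or the arc already exists); $G_{t+1}$ is $G_t$ together with all arcs added in round $t$. Arcs are never removed. The process has terminated at time $t$ if for all nodes $u\neq v$ such that $G_0$ contains a directed path from $u$ to $v$, the arc $(u,v)$ belongs to $G_t$. *)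

theory Defs
  imports "HOL-Probability.Probability"
begin

definition digraph_on :: "nat \<Rightarrow> (nat \<times> nat) set \<Rightarrow> bool" where
  "digraph_on n G \<longleftrightarrow> G \<subseteq> {..<n} \<times> {..<n} \<and> (\<forall>x. (x, x) \<notin> G)"

definition weakly_connected_on :: "nat \<Rightarrow> (nat \<times> nat) set \<Rightarrow> bool" where
  "weakly_connected_on n G \<longleftrightarrow> (\<forall>u<n. \<forall>v<n. (u, v) \<in> (G \<union> G\<inverse>)\<^sup>*)"

definition out_nbrs :: "(nat \<times> nat) set \<Rightarrow> nat \<Rightarrow> nat set" where
  "out_nbrs G x = {y. (x, y) \<in> G}"

definition node_step :: "(nat \<times> nat) set \<Rightarrow> nat \<Rightarrow> (nat \<times> nat) option pmf" where
  "node_step G x =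
     (if out_nbrs G x = {} then return_pmf None
      else do {
        v \<leftarrow> pmf_of_set (out_nbrs G x);
        (if out_nbrs G v = {} then return_pmf None
         else do {
           w \<leftarrow> pmf_of_set (out_nbrs G v);
           return_pmf (if w = x then None else Some (x, w))
         })
      })"

definition round_step :: "nat \<Rightarrow> (nat \<times> nat) set \<Rightarrow> (nat \<times> nat) set pmf" where
  "round_step n G =
     map_pmf (\<lambda>f. G \<union> {a. \<exists>x<n. f x = Some a}) (Pi_pmf {..<n} None (node_step G))"

primrec two_hop :: "nat \<Rightarrow> (nat \<times> nat) set \<Rightarrow> nat \<Rightarrow> (nat \<times> nat) set pmf" where
  "two_hop n G0 0 = return_pmf G0"
| "two_hop n G0 (Suc t) = two_hop n G0 t \<bind> round_step n"

definition terminated :: "(nat \<times> nat) set \<Rightarrow> (nat \<times> nat) set \<Rightarrow> bool" where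
  "terminated G0 G \<longleftrightarrow> (\<forall>u v. u \<noteq> v \<and> (u, v) \<in> G0\<^sup>+ \<longrightarrow> (u, v) \<in> G)"

definition term_prob :: "nat \<Rightarrow> (nat \<times> nat) set \<Rightarrow> nat \<Rightarrow> real" where
  "term_prob n G0 t = measure_pmf.prob (two_hop n G0 t) {G. terminated G0 G}"

end

theory Submission
  imports Defs
begin

(* Both parts of the theorem are proved by a drift (supermartingale) argument on a potential that
   is a function of the current graph G_t.

   (a) Upper bound.  Fix u \<noteq> w with w reachable from u and let d be the length of a shortest walk
   from u to w in G_t.  On such a walk the nodes at the even positions i propose the shortcut arcs
   to position i + 2 independently, each with probability at least 1/n\<^sup>2, and disjoint shortcuts
   shorten the walk by one each; hence E[d_{t+1} - 1] \<le> (1 - 1/(2n\<^sup>2)) (d_t - 1).  Iterating,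
   Markov's inequality and a union bound over the at most n\<^sup>2 pairs give termination within
   \<lceil>10 n\<^sup>2 ln n\<rceil> rounds with probability at least 1 - 1/n.

   (b) Lower bound.  On the hub graph with 3m + 1 nodes the root must learn m private arcs
   0 \<rightarrow> b_i, each of which only the root proposes and only with probability at most 1/(m (m + 1)).
   With K_t the number of private arcs still missing, E[1/(K_t + 1)] grows by at most the
   factor 1 + 1/(m (m + 1)) per round, which bounds the termination probability after
   \<lfloor>n\<^sup>2 ln n / 32\<rfloor> rounds by 3/\<surd>n. *)

(* Finite graphs have finite out-neighbourhoods, so the uniform choices below are well defined. *)
lemma finite_out_nbrs: "finite G \<Longrightarrow> finite (out_nbrs G x)"
proof -
  assume "finite G"
  have "out_nbrs G x = G `` {x}" by (auto simp: out_nbrs_def)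
  thus ?thesis using \<open>finite G\<close> by simp
qed

lemma pmf_node_step_arc:
  assumes fin: "finite G" and xw: "x \<noteq> w"
  shows "pmf (node_step G x) (Some (x, w)) =
    (if out_nbrs G x = {} then 0 else
      (\<Sum>v\<in>out_nbrs G x. if w \<in> out_nbrs G v then 1 / real (card (out_nbrs G v)) else 0)
        / real (card (out_nbrs G x)))"
proof (cases "out_nbrs G x = {}")
  case True thus ?thesis by (simp add: node_step_def)
next
  case False
  have second_hop: "pmf (if out_nbrs G v = {} then return_pmf None
         else pmf_of_set (out_nbrs G v) \<bind> (\<lambda>w'. return_pmf (if w' = x then None else Some (x, w'))))
         (Some (x, w)) = (if w \<in> out_nbrs G v then 1 / real (card (out_nbrs G v)) else 0)" for v
  proof (cases "out_nbrs G v = {}")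
    case True thus ?thesis by simp
  next
    case nonempty: False
    have "pmf (pmf_of_set (out_nbrs G v) \<bind> (\<lambda>w'. return_pmf (if w' = x then None else Some (x, w'))))
         (Some (x, w)) = (\<Sum>w'\<in>out_nbrs G v. indicator {w} w') / real (card (out_nbrs G v))"
      using nonempty finite_out_nbrs[OF fin] xw
      by (simp add: pmf_bind integral_pmf_of_set indicator_def) (auto intro!: arg_cong[where f=card])
    also have "\<dots> = (if w \<in> out_nbrs G v then 1 / real (card (out_nbrs G v)) else 0)"
      using finite_out_nbrs[OF fin] by (simp add: indicator_def sum.delta)
    finally show ?thesis using nonempty by simp
  qed
  show ?thesis using False finite_out_nbrs[OF fin]
    by (simp add: node_step_def pmf_bind integral_pmf_of_set second_hop)
qed

lemma node_step_proposes_two_hop: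
  assumes fin: "finite G" and a: "Some a \<in> set_pmf (node_step G x)"
  shows "\<exists>v w. a = (x, w) \<and> (x, v) \<in> G \<and> (v, w) \<in> G \<and> w \<noteq> x"
  using a finite_out_nbrs[OF fin]
  by (auto simp: node_step_def out_nbrs_def split: if_splits) (subst (asm) set_pmf_of_set; force)

lemma set_pmf_round_step:
  assumes "G' \<in> set_pmf (round_step n G)"
  obtains \<sigma> where "\<forall>x<n. \<sigma> x \<in> set_pmf (node_step G x)" and "G' = G \<union> {a. \<exists>x<n. \<sigma> x = Some a}"
  using assms by (auto simp: round_step_def set_Pi_pmf PiE_dflt_def)

lemma round_step_between:
  assumes fin: "finite G" and G': "G' \<in> set_pmf (round_step n G)"
  shows "G \<subseteq> G' \<and> G' \<subseteq> G\<^sup>+"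
proof -
  obtain \<sigma> where \<sigma>: "\<forall>x<n. \<sigma> x \<in> set_pmf (node_step G x)" and G'_eq: "G' = G \<union> {a. \<exists>x<n. \<sigma> x = Some a}"
    using G' by (rule set_pmf_round_step)
  have "a \<in> G\<^sup>+" if "x < n" "\<sigma> x = Some a" for x a
    using node_step_proposes_two_hop[OF fin, of a x] \<sigma> that
    by (metis trancl.trancl_into_trancl r_into_trancl')
  thus ?thesis using G'_eq by auto
qed

lemma two_hop_between:
  assumes fin: "finite G0" and G: "G \<in> set_pmf (two_hop n G0 t)"
  shows "G0 \<subseteq> G \<and> G \<subseteq> G0\<^sup>+"
  using G
proof (induction t arbitrary: G)
  case 0 thus ?case by auto
next
  case (Suc t)
  then obtain H where H: "H \<in> set_pmf (two_hop n G0 t)" "G \<in> set_pmf (round_step n H)" by auto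
  have IH: "G0 \<subseteq> H" "H \<subseteq> G0\<^sup>+" using Suc.IH[OF H(1)] by auto
  have "finite H" using IH(2) fin finite_trancl rev_finite_subset by blast
  from round_step_between[OF this H(2)] have "H \<subseteq> G" "G \<subseteq> H\<^sup>+" by auto
  moreover have "H\<^sup>+ \<subseteq> G0\<^sup>+" using IH(2) by (metis trancl_mono trans_trancl trancl_id subsetI)
  ultimately show ?case using IH by blast
qed

lemma two_hop_drift:
  assumes fin: "finite G0"
    and step: "\<And>G. G0 \<subseteq> G \<Longrightarrow> G \<subseteq> G0\<^sup>+ \<Longrightarrow> (\<integral>\<^sup>+G'. \<Phi> G' \<partial>round_step n G) \<le> r * \<Phi> G"
  shows "(\<integral>\<^sup>+G. \<Phi> G \<partial>two_hop n G0 t) \<le> r ^ t * \<Phi> G0"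
proof (induction t)
  case 0 thus ?case by simp
next
  case (Suc t)
  have "(\<integral>\<^sup>+G. \<Phi> G \<partial>two_hop n G0 (Suc t)) = (\<integral>\<^sup>+G. (\<integral>\<^sup>+G'. \<Phi> G' \<partial>round_step n G) \<partial>two_hop n G0 t)"
    by simp
  also have "\<dots> \<le> (\<integral>\<^sup>+G. r * \<Phi> G \<partial>two_hop n G0 t)"
    using two_hop_between[OF fin] step by (intro nn_integral_mono_AE) (auto simp: AE_measure_pmf_iff)
  also have "\<dots> = r * (\<integral>\<^sup>+G. \<Phi> G \<partial>two_hop n G0 t)"
    by (simp add: nn_integral_cmult)
  also have "\<dots> \<le> r * (r ^ t * \<Phi> G0)" by (intro mult_left_mono Suc.IH) auto
  finally show ?case by (simp add: mult.assoc)
qed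

lemma emeasure_Pi_pmf_coordinate:
  assumes "finite A" and "x \<in> A"
  shows "emeasure (measure_pmf (Pi_pmf A dflt F)) {\<sigma>. \<sigma> x \<in> Y} = emeasure (measure_pmf (F x)) Y"
proof -
  have "map_pmf (\<lambda>\<sigma>. \<sigma> x) (Pi_pmf A dflt F) = F x"
    using Pi_pmf_component[OF assms(1), of x dflt F] assms(2) by simp
  hence "emeasure (measure_pmf (F x)) Y = emeasure (measure_pmf (Pi_pmf A dflt F)) ((\<lambda>\<sigma>. \<sigma> x) -` Y)"
    by (metis emeasure_map_pmf)
  thus ?thesis by (simp add: vimage_def)
qed

lemma expected_hits_Pi_pmf:
  assumes "finite A" "finite I" "g ` I \<subseteq> A"
  shows "(\<integral>\<^sup>+\<sigma>. ennreal (real (card {i\<in>I. \<sigma> (g i) = c i})) \<partial>Pi_pmf A dflt F)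
       = (\<Sum>i\<in>I. ennreal (pmf (F (g i)) (c i)))"
proof -
  have "ennreal (real (card {i\<in>I. \<sigma> (g i) = c i})) = (\<Sum>i\<in>I. indicator {\<sigma>. \<sigma> (g i) = c i} \<sigma>)" for \<sigma>
    using assms(2)
    by (simp add: indicator_def sum.If_cases Int_def ennreal_of_nat_eq_real_of_nat flip: sum_ennreal)
  hence "(\<integral>\<^sup>+\<sigma>. ennreal (real (card {i\<in>I. \<sigma> (g i) = c i})) \<partial>Pi_pmf A dflt F)
       = (\<Sum>i\<in>I. emeasure (measure_pmf (Pi_pmf A dflt F)) {\<sigma>. \<sigma> (g i) \<in> {c i}})"
    by (simp add: nn_integral_sum)
  also have "\<dots> = (\<Sum>i\<in>I. ennreal (pmf (F (g i)) (c i)))"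
  proof (intro sum.cong refl)
    fix i assume "i \<in> I"
    hence "g i \<in> A" using assms(3) by blast
    thus "emeasure (measure_pmf (Pi_pmf A dflt F)) {\<sigma>. \<sigma> (g i) \<in> {c i}} = ennreal (pmf (F (g i)) (c i))"
      using emeasure_Pi_pmf_coordinate[OF assms(1), of "g i" dflt F "{c i}"] by (simp add: emeasure_pmf_single)
  qed
  finally show ?thesis .
qed

lemma path_relpow:
  assumes "\<forall>i<d. (f i, f (Suc i)) \<in> R"
  shows "(f 0, f d) \<in> R ^^ d"
  unfolding relpow_fun_conv using assms by blast

lemma card_even_set_shift:
  fixes S :: "nat set"
  assumes S: "S \<subseteq> {i. even i \<and> i + 2 \<le> d + 2}"
  shows "card S = card (S \<inter> {0}) + card {i. i + 2 \<in> S}"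
proof -
  define S' where "S' = {i. i + 2 \<in> S}"
  have "finite S'" using S by (intro finite_subset[of S' "{..d}"]) (auto simp: S'_def subset_iff)
  have S_split: "S = (S \<inter> {0}) \<union> (\<lambda>i. i + 2) ` S'"
  proof (intro set_eqI iffI)
    fix i assume i: "i \<in> S"
    show "i \<in> (S \<inter> {0}) \<union> (\<lambda>i. i + 2) ` S'"
    proof (cases "i = 0")
      case False
      have "i \<noteq> 1" using i S by auto
      hence "i \<ge> 2" using False by linarith
      then obtain j where "i = j + 2" by (intro that[of "i - 2"]) simp
      thus ?thesis using i by (auto simp: S'_def)
    qed (use i in simp)
  qed (auto simp: S'_def)
  have "card S = card (S \<inter> {0}) + card ((\<lambda>i. i + 2) ` S')"
    by (subst S_split, rule card_Un_disjoint) (use \<open>finite S'\<close> in auto)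
  thus ?thesis by (simp add: card_image inj_on_def S'_def)
qed

lemma shortcut_path:
  assumes "\<forall>i<d. (f i, f (Suc i)) \<in> R"
    and "S \<subseteq> {i. even i \<and> i + 2 \<le> d}"
    and "\<forall>i\<in>S. (f i, f (i + 2)) \<in> R"
  shows "(f 0, f d) \<in> R ^^ (d - card S)"
  using assms
proof (induction d arbitrary: f S rule: less_induct)
  case (less d)
  show ?case
  proof (cases "d < 2")
    case True
    hence "S = {}" using less.prems(2) by auto
    thus ?thesis using path_relpow[OF less.prems(1)] by simp
  next
    case False
    then obtain d' where d: "d = d' + 2" by (intro that[of "d - 2"]) simp
    define S' where "S' = {i. i + 2 \<in> S}"
    have S'_sub: "S' \<subseteq> {i. even i \<and> i + 2 \<le> d'}" using less.prems(2) by (auto simp: S'_def d)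
    have IH: "(f 2, f d) \<in> R ^^ (d' - card S')"
      using less.IH[of d' "\<lambda>i. f (i + 2)" S'] less.prems S'_sub
      by (auto simp: d S'_def add.commute[of _ 2] numeral_2_eq_2)
    have card_S: "card S = card (S \<inter> {0}) + card S'"
      unfolding S'_def using less.prems(2) by (intro card_even_set_shift) (simp add: d)
    have "S' \<subseteq> {..<d'}" using S'_sub by auto
    hence "card S' \<le> d'" using card_mono[of "{..<d'}" S'] by simp
    show ?thesis
    proof (cases "0 \<in> S")
      case True
      hence "(f 0, f 2) \<in> R" using bspec[OF less.prems(3) True] by (simp add: numeral_2_eq_2)
      moreover have "d - card S = Suc (d' - card S')"
        using card_S True \<open>card S' \<le> d'\<close> by (simp add: d)
      ultimately show ?thesis using relpow_Suc_I2[OF _ IH] by simp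
    next
      case False
      have "(f 0, f 1) \<in> R" "(f 1, f 2) \<in> R" using less.prems(1) by (auto simp: d numeral_2_eq_2)
      moreover have "d - card S = Suc (Suc (d' - card S'))"
        using card_S False \<open>card S' \<le> d'\<close> by (simp add: d)
      ultimately show ?thesis using relpow_Suc_I2[OF _ relpow_Suc_I2[OF _ IH]] by simp
    qed
  qed
qed

(* A shortest walk never returns after two steps: otherwise the loop could be cut out. *)
lemma shortest_path_no_return:
  assumes path: "\<forall>i<d. (f i, f (Suc i)) \<in> R"
    and shortest: "\<And>k. (f 0, f d) \<in> R ^^ k \<Longrightarrow> d \<le> k"
    and i: "i + 2 \<le> d"
  shows "f i \<noteq> f (i + 2)"
proof
  assume loop: "f i = f (i + 2)"
  define g where "g = (\<lambda>j. if j \<le> i then f j else f (j + 2))"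
  have "(g j, g (Suc j)) \<in> R" if j: "j < d - 2" for j
  proof (cases "j < i")
    case True thus ?thesis using path i by (auto simp: g_def)
  next
    case False
    have "(f (j + 2), f (Suc (j + 2))) \<in> R" using path j by auto
    thus ?thesis using False loop by (cases "j = i") (auto simp: g_def)
  qed
  hence "(g 0, g (d - 2)) \<in> R ^^ (d - 2)" by (intro path_relpow) blast
  moreover have "g 0 = f 0" by (simp add: g_def)
  moreover have "g (d - 2) = f d"
  proof (cases "d - 2 \<le> i")
    case True
    hence "i = d - 2" "i + 2 = d" using i by linarith+
    thus ?thesis using loop by (simp add: g_def)
  next
    case False
    moreover have "d - 2 + 2 = d" using i by linarith
    ultimately show ?thesis by (simp add: g_def)
  qed
  ultimately have "d \<le> d - 2" using shortest by metis
  thus False using i by linarith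
qed

lemma card_even_positions: "card {i::nat. even i \<and> i + 2 \<le> d} = d div 2"
proof -
  have "{i::nat. even i \<and> i + 2 \<le> d} = (\<lambda>j. 2 * j) ` {..< d div 2}"
    by (auto elim!: evenE simp: image_iff)
  thus ?thesis by (simp add: card_image inj_on_def)
qed

definition walk_dist :: "(nat \<times> nat) set \<Rightarrow> nat \<Rightarrow> nat \<Rightarrow> nat" where
  "walk_dist G u w = (LEAST k. (u, w) \<in> G ^^ k)"

lemma walk_dist_le: "(u, w) \<in> G ^^ k \<Longrightarrow> walk_dist G u w \<le> k"
  unfolding walk_dist_def by (rule Least_le)

lemma walk_dist_walk: "(u, w) \<in> G\<^sup>+ \<Longrightarrow> (u, w) \<in> G ^^ walk_dist G u w"
  unfolding walk_dist_def by (rule LeastI_ex) (use trancl_power in blast)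

lemma walk_dist_le_card: "finite G \<Longrightarrow> (u, w) \<in> G\<^sup>+ \<Longrightarrow> walk_dist G u w \<le> card G"
  using walk_dist_le by (fastforce simp: trancl_finite_eq_relpow)

lemma digraph_on_trancl_subset: "digraph_on n G0 \<Longrightarrow> G0\<^sup>+ \<subseteq> {..<n} \<times> {..<n}"
  unfolding digraph_on_def by (simp add: trancl_subset_Sigma)

lemma finite_square_subset: "G \<subseteq> {..<n::nat} \<times> {..<n} \<Longrightarrow> finite G"
  by (erule finite_subset) simp

lemma digraph_on_finite: "digraph_on n G0 \<Longrightarrow> finite G0"
  unfolding digraph_on_def by (auto intro: finite_square_subset)

(* Any arc (x, y) closing a two-hop walk x \<rightarrow> v \<rightarrow> y is proposed with probability at least 1/n\<^sup>2:
   choose v (probability \<ge> 1/n), then y (probability \<ge> 1/n). *)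
lemma pmf_node_step_lower:
  assumes sq: "G \<subseteq> {..<n} \<times> {..<n}"
    and xv: "(x, v) \<in> G" and vy: "(v, y) \<in> G" and xy: "x \<noteq> y"
  shows "1 / real n ^ 2 \<le> pmf (node_step G x) (Some (x, y))"
proof -
  have fin: "finite G" using sq by (rule finite_square_subset)
  let ?N = "out_nbrs G"
  have vN: "v \<in> ?N x" and yN: "y \<in> ?N v" using xv vy by (auto simp: out_nbrs_def)
  have pos: "card (?N x) > 0" "card (?N v) > 0"
    using vN yN finite_out_nbrs[OF fin] by (auto simp: card_gt_0_iff)
  have "?N z \<subseteq> {..<n}" for z using sq by (auto simp: out_nbrs_def)
  hence le_n: "card (?N z) \<le> n" for z using card_mono[OF finite_lessThan] by fastforce
  have "1 / real n ^ 2 \<le> (1 / real (card (?N v))) / real (card (?N x))"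
  proof -
    have "real (card (?N v)) * real (card (?N x)) \<le> real n * real n"
      using le_n by (intro mult_mono) auto
    thus ?thesis using pos by (simp add: power2_eq_square frac_le divide_divide_eq_left)
  qed
  also have "\<dots> \<le> (\<Sum>v'\<in>?N x. if y \<in> ?N v' then 1 / real (card (?N v')) else 0) / real (card (?N x))"
    using member_le_sum[OF vN, of "\<lambda>v'. if y \<in> ?N v' then 1 / real (card (?N v')) else 0"]
      finite_out_nbrs[OF fin] yN
    by (intro divide_right_mono) auto
  also have "\<dots> = pmf (node_step G x) (Some (x, y))"
    using pmf_node_step_arc[OF fin xy] vN by auto
  finally show ?thesis .
qed

lemma nn_integral_le_budget:
  fixes X Y :: "'a \<Rightarrow> nat"
  assumes budget: "\<And>\<sigma>. X \<sigma> + Y \<sigma> \<le> a"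
    and gain: "ennreal b \<le> (\<integral>\<^sup>+\<sigma>. ennreal (real (Y \<sigma>)) \<partial>measure_pmf P)" and b: "b \<ge> 0"
  shows "(\<integral>\<^sup>+\<sigma>. ennreal (real (X \<sigma>)) \<partial>measure_pmf P) \<le> ennreal (real a - b)"
proof -
  define mean_X where "mean_X = (\<integral>\<^sup>+\<sigma>. ennreal (real (X \<sigma>)) \<partial>measure_pmf P)"
  have "mean_X + (\<integral>\<^sup>+\<sigma>. ennreal (real (Y \<sigma>)) \<partial>measure_pmf P)
      = (\<integral>\<^sup>+\<sigma>. ennreal (real (X \<sigma> + Y \<sigma>)) \<partial>measure_pmf P)"
    unfolding mean_X_def by (subst nn_integral_add[symmetric]) (auto simp: ennreal_plus)
  also have "\<dots> \<le> (\<integral>\<^sup>+\<sigma>. ennreal (real a) \<partial>measure_pmf P)"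
    using budget by (intro nn_integral_mono ennreal_leI) (metis of_nat_add of_nat_le_iff)
  finally have "mean_X + ennreal b \<le> ennreal (real a)"
    using gain by (simp add: measure_pmf.emeasure_space_1) (meson add_left_mono order_trans)
  moreover from this have "mean_X \<noteq> \<top>" by (auto simp: top_add top_unique)
  then obtain x where "mean_X = ennreal x" "x \<ge> 0" by (cases mean_X) auto
  ultimately show ?thesis using b unfolding mean_X_def
    by (simp add: ennreal_plus[symmetric] ennreal_le_iff del: ennreal_plus)
qed

lemma expected_shortcuts:
  assumes sq: "G \<subseteq> {..<n} \<times> {..<n}" and path: "\<forall>i<d. (f i, f (Suc i)) \<in> G"
    and shortest: "\<And>k. (f 0, f d) \<in> G ^^ k \<Longrightarrow> d \<le> k"
  shows "ennreal (real (d div 2) / real n ^ 2) \<le> (\<integral>\<^sup>+\<sigma>. ennreal (real (card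
           {i\<in>{i. even i \<and> i + 2 \<le> d}. \<sigma> (f i) = Some (f i, f (i + 2))})) \<partial>Pi_pmf {..<n} None (node_step G))"
proof -
  define I where "I = {i. even i \<and> i + 2 \<le> d}"
  have finI: "finite I" unfolding I_def by (rule finite_subset[of _ "{..d}"]) auto
  have "f i < n" if "i < d" for i using path that sq by blast
  hence fI: "f ` I \<subseteq> {..<n}" by (auto simp: I_def)
  have "ennreal (real (d div 2) / real n ^ 2) = (\<Sum>i\<in>I. ennreal (1 / real n ^ 2))"
    using card_even_positions[of d] by (simp add: I_def ennreal_of_nat_eq_real_of_nat flip: ennreal_mult')
  also have "\<dots> \<le> (\<Sum>i\<in>I. ennreal (pmf (node_step G (f i)) (Some (f i, f (i + 2)))))"
  proof (intro sum_mono ennreal_leI pmf_node_step_lower[OF sq])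
    fix i assume "i \<in> I"
    hence i: "i + 2 \<le> d" by (simp add: I_def)
    show "(f i, f (Suc i)) \<in> G" "(f (Suc i), f (i + 2)) \<in> G" using path i by auto
    show "f i \<noteq> f (i + 2)" by (rule shortest_path_no_return[OF path shortest i])
  qed
  also have "\<dots> = (\<integral>\<^sup>+\<sigma>. ennreal (real (card {i\<in>I. \<sigma> (f i) = Some (f i, f (i + 2))}))
                     \<partial>Pi_pmf {..<n} None (node_step G))"
    using finI fI by (intro expected_hits_Pi_pmf[symmetric]) auto
  finally show ?thesis unfolding I_def .
qed

lemma contraction_factor_nonneg: "n > 0 \<Longrightarrow> 0 \<le> 1 - 1 / (2 * real n ^ 2)"
proof -
  assume "n > 0"
  hence "1 \<le> real n ^ 2" by (simp add: Suc_le_eq)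
  thus ?thesis by (simp add: divide_le_eq)
qed

(* On a shortest walk of length d
   each of the \<lfloor>d/2\<rfloor> even positions i proposes the shortcut to position i + 2 with
   probability at least 1/n\<^sup>2, and disjoint shortcuts shorten the walk by one each. *)
lemma walk_dist_contraction:
  assumes dg: "digraph_on n G0" and G: "G0 \<subseteq> G" "G \<subseteq> G0\<^sup>+"
    and uw: "u \<noteq> w" "(u, w) \<in> G0\<^sup>+"
  shows "(\<integral>\<^sup>+G'. ennreal (real (walk_dist G' u w - 1)) \<partial>round_step n G)
     \<le> ennreal (1 - 1 / (2 * real n ^ 2)) * ennreal (real (walk_dist G u w - 1))"
proof -
  have sq: "G \<subseteq> {..<n} \<times> {..<n}" using G(2) digraph_on_trancl_subset[OF dg] by blast
  define d where "d = walk_dist G u w"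
  have "(u, w) \<in> G ^^ d"
    unfolding d_def using uw(2) G(1) trancl_mono by (blast intro: walk_dist_walk)
  then obtain f where f: "f 0 = u" "f d = w" and path: "\<forall>i<d. (f i, f (Suc i)) \<in> G"
    unfolding relpow_fun_conv by blast
  have "d > 0" using f uw(1) by (cases d) auto
  hence "n > 0" using path sq by fastforce
  have shortest: "d \<le> k" if "(f 0, f d) \<in> G ^^ k" for k
    using that f unfolding d_def by (simp add: walk_dist_le)
  define P where "P = Pi_pmf {..<n} None (node_step G)"
  define Gs where "Gs = (\<lambda>\<sigma>. G \<union> {a. \<exists>x<n. \<sigma> x = Some a})"
  define I where "I = {i. even i \<and> i + 2 \<le> d}"
  define S where "S = (\<lambda>\<sigma>. {i\<in>I. \<sigma> (f i) = Some (f i, f (i + 2))})"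
  have budget: "(walk_dist (Gs \<sigma>) u w - 1) + card (S \<sigma>) \<le> d - 1" for \<sigma>
  proof -
    have "(f 0, f d) \<in> Gs \<sigma> ^^ (d - card (S \<sigma>))"
    proof (rule shortcut_path)
      show "\<forall>i<d. (f i, f (Suc i)) \<in> Gs \<sigma>" using path by (auto simp: Gs_def)
      show "S \<sigma> \<subseteq> {i. even i \<and> i + 2 \<le> d}" by (auto simp: S_def I_def)
      have "f i < n" if "i < d" for i using path that sq by blast
      thus "\<forall>i\<in>S \<sigma>. (f i, f (i + 2)) \<in> Gs \<sigma>" by (auto simp: S_def I_def Gs_def)
    qed
    hence "walk_dist (Gs \<sigma>) u w \<le> d - card (S \<sigma>)" using f by (simp add: walk_dist_le)
    moreover have "finite I" unfolding I_def by (rule finite_subset[of _ "{..d}"]) auto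
    hence "card (S \<sigma>) \<le> card I" by (rule card_mono) (auto simp: S_def)
    ultimately show ?thesis using card_even_positions[of d] \<open>d > 0\<close> unfolding I_def by linarith
  qed
  have gain: "ennreal (real (d div 2) / real n ^ 2) \<le> (\<integral>\<^sup>+\<sigma>. ennreal (real (card (S \<sigma>))) \<partial>P)"
    unfolding P_def S_def I_def using sq path shortest by (rule expected_shortcuts)
  have "(\<integral>\<^sup>+G'. ennreal (real (walk_dist G' u w - 1)) \<partial>round_step n G)
      = (\<integral>\<^sup>+\<sigma>. ennreal (real (walk_dist (Gs \<sigma>) u w - 1)) \<partial>P)"
    by (simp add: round_step_def P_def Gs_def)
  also have "\<dots> \<le> ennreal (real (d - 1) - real (d div 2) / real n ^ 2)"
    using budget gain by (intro nn_integral_le_budget) auto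
  also have "\<dots> \<le> ennreal ((1 - 1 / (2 * real n ^ 2)) * real (d - 1))"
  proof (intro ennreal_leI)
    have "real (d - 1) \<le> 2 * real (d div 2)" by linarith
    hence "real (d - 1) / (2 * real n ^ 2) \<le> real (d div 2) / real n ^ 2"
      using \<open>n > 0\<close> by (simp add: field_simps)
    thus "real (d - 1) - real (d div 2) / real n ^ 2 \<le> (1 - 1 / (2 * real n ^ 2)) * real (d - 1)"
      by (simp add: algebra_simps)
  qed
  also have "\<dots> = ennreal (1 - 1 / (2 * real n ^ 2)) * ennreal (real (d - 1))"
    using contraction_factor_nonneg[OF \<open>n > 0\<close>] by (intro ennreal_mult) simp_all
  finally show ?thesis unfolding d_def .
qed

(* Markov's inequality applied to the potential walk_dist G u w - 1, which is at least 1 as long as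
   the arc (u, w) is missing and is initially at most n\<^sup>2. *)
lemma missing_arc_prob:
  assumes dg: "digraph_on n G0" and uw: "u \<noteq> w" "(u, w) \<in> G0\<^sup>+"
  shows "measure_pmf.prob (two_hop n G0 T) {G. (u, w) \<notin> G} \<le> (1 - 1 / (2 * real n ^ 2)) ^ T * real n ^ 2"
proof -
  define r where "r = 1 - 1 / (2 * real n ^ 2)"
  define \<Phi> where "\<Phi> = (\<lambda>G. ennreal (real (walk_dist G u w - 1)))"
  have fin: "finite G0" by (rule digraph_on_finite[OF dg])
  have "n > 0" using uw(2) digraph_on_trancl_subset[OF dg] by fastforce
  hence r: "r \<ge> 0" unfolding r_def by (rule contraction_factor_nonneg)
  have indicator_le: "indicator {G. (u, w) \<notin> G} G \<le> \<Phi> G" if "G \<in> set_pmf (two_hop n G0 T)" for G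
  proof (cases "(u, w) \<in> G")
    case False
    have "(u, w) \<in> G\<^sup>+" using uw(2) two_hop_between[OF fin that] trancl_mono by blast
    hence "(u, w) \<in> G ^^ walk_dist G u w" by (rule walk_dist_walk)
    hence "walk_dist G u w \<noteq> 0" "walk_dist G u w \<noteq> 1"
      using uw(1) False by (metis relpow_0_E, metis relpow_1)
    thus ?thesis using False by (simp add: \<Phi>_def)
  qed simp
  have "\<Phi> G0 \<le> ennreal (real n ^ 2)"
  proof -
    have "card G0 \<le> card ({..<n} \<times> {..<n})" using dg unfolding digraph_on_def by (intro card_mono) auto
    hence "walk_dist G0 u w \<le> n ^ 2" using walk_dist_le_card[OF fin uw(2)] by (simp add: power2_eq_square)
    thus ?thesis unfolding \<Phi>_def by (intro ennreal_leI) (simp flip: of_nat_power)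
  qed
  have "emeasure (measure_pmf (two_hop n G0 T)) {G. (u, w) \<notin> G} = (\<integral>\<^sup>+G. indicator {G. (u, w) \<notin> G} G \<partial>two_hop n G0 T)"
    by simp
  also have "\<dots> \<le> (\<integral>\<^sup>+G. \<Phi> G \<partial>two_hop n G0 T)"
    using indicator_le by (intro nn_integral_mono_AE) (simp add: AE_measure_pmf_iff)
  also have "\<dots> \<le> ennreal r ^ T * \<Phi> G0"
    unfolding \<Phi>_def r_def by (rule two_hop_drift[OF fin walk_dist_contraction[OF dg _ _ uw]])
  also have "\<dots> \<le> ennreal (r ^ T) * ennreal (real n ^ 2)"
    using r \<open>\<Phi> G0 \<le> _\<close> by (intro mult_mono) (auto simp: ennreal_power)
  also have "\<dots> = ennreal (r ^ T * real n ^ 2)" using r by (simp add: ennreal_mult)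
  finally have "measure_pmf.prob (two_hop n G0 T) {G. (u, w) \<notin> G} \<le> r ^ T * real n ^ 2"
    using r by (simp add: measure_pmf.emeasure_eq_measure ennreal_le_iff)
  thus ?thesis unfolding r_def .
qed

lemma exp_decay_bound:
  fixes n T :: nat
  assumes n: "n \<ge> 2" and T: "real T \<ge> 10 * real n ^ 2 * ln (real n)"
  shows "real n ^ 4 * (1 - 1 / (2 * real n ^ 2)) ^ T \<le> 1 / real n"
proof -
  define a where "a = 1 / (2 * real n ^ 2)"
  have a: "a \<ge> 0" "a \<le> 1" using contraction_factor_nonneg[of n] n by (auto simp: a_def)
  have "(1 - a) ^ T \<le> exp (- a) ^ T"
    using a by (intro power_mono) (auto simp: exp_ge_add_one_self[of "-a", simplified])
  also have "\<dots> = exp (- (a * real T))" by (simp add: exp_of_nat_mult[symmetric] mult.commute)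
  also have "\<dots> \<le> exp (- (5 * ln (real n)))"
  proof -
    have "a * (10 * real n ^ 2 * ln (real n)) \<le> a * real T" using T a by (intro mult_left_mono) auto
    moreover have "a * (10 * real n ^ 2 * ln (real n)) = 5 * ln (real n)" using n by (simp add: a_def field_simps)
    ultimately show ?thesis by simp
  qed
  also have "\<dots> = 1 / real n ^ 5"
    using exp_of_nat_mult[of 5 "ln (real n)"] n by (simp add: exp_minus field_simps)
  finally have "real n ^ 4 * (1 - a) ^ T \<le> real n ^ 4 * (1 / real n ^ 5)" by (intro mult_left_mono) auto
  also have "\<dots> = 1 / real n" using n by (simp add: field_simps power_eq_if)
  finally show ?thesis by (simp add: a_def)
qed

(* Part (a): after \<lceil>10 n\<^sup>2 ln n\<rceil> rounds the process has terminated with probability \<ge> 1 - 1/n,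
   by the union bound over the at most n\<^sup>2 arcs of the transitive closure. *)
lemma termination_whp:
  assumes n: "n \<ge> 2" and dg: "digraph_on n G0"
  shows "1 - 1 / real n \<le> term_prob n G0 (nat \<lceil>10 * real n ^ 2 * ln (real n)\<rceil>)"
proof -
  define T where "T = nat \<lceil>10 * real n ^ 2 * ln (real n)\<rceil>"
  define M where "M = measure_pmf (two_hop n G0 T)"
  define B where "B = (1 - 1 / (2 * real n ^ 2)) ^ T * real n ^ 2"
  define Pairs where "Pairs = {(u, w). u \<noteq> w \<and> (u, w) \<in> G0\<^sup>+}"
  have Pairs_sub: "Pairs \<subseteq> {..<n} \<times> {..<n}" using digraph_on_trancl_subset[OF dg] unfolding Pairs_def by auto
  hence "finite Pairs" by (rule finite_square_subset)
  have "card Pairs \<le> n ^ 2"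
    using card_mono[OF _ Pairs_sub] by (simp add: card_cartesian_product power2_eq_square)
  have B: "B \<ge> 0" using contraction_factor_nonneg[of n] n unfolding B_def by simp
  have failures: "{G. \<not> terminated G0 G} = (\<Union>p\<in>Pairs. {G. p \<notin> G})"
    unfolding terminated_def Pairs_def by auto
  have "measure M {G. \<not> terminated G0 G} \<le> (\<Sum>p\<in>Pairs. measure M {G. p \<notin> G})"
    unfolding failures M_def by (intro measure_pmf.finite_measure_subadditive_finite[OF \<open>finite Pairs\<close>]) auto
  also have "\<dots> \<le> (\<Sum>p\<in>Pairs. B)"
  proof (intro sum_mono)
    fix p assume "p \<in> Pairs"
    then obtain u w where "p = (u, w)" "u \<noteq> w" "(u, w) \<in> G0\<^sup>+" unfolding Pairs_def by blast
    thus "measure M {G. p \<notin> G} \<le> B" unfolding M_def B_def using missing_arc_prob[OF dg] by blast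
  qed
  also have "\<dots> \<le> real n ^ 2 * B"
    using \<open>card Pairs \<le> n ^ 2\<close> B by (simp add: mult_right_mono flip: of_nat_power)
  also have "\<dots> = real n ^ 4 * (1 - 1 / (2 * real n ^ 2)) ^ T"
    unfolding B_def by (simp add: algebra_simps power_eq_if)
  also have "\<dots> \<le> 1 / real n"
    by (rule exp_decay_bound[OF n]) (unfold T_def, linarith)
  finally have "measure M {G. \<not> terminated G0 G} \<le> 1 / real n" .
  moreover have "term_prob n G0 T = 1 - measure M {G. \<not> terminated G0 G}"
  proof -
    have "term_prob n G0 T = measure M (space M - {G. \<not> terminated G0 G})"
      unfolding term_prob_def M_def by (rule arg_cong[where f = "measure _"]) auto
    also have "\<dots> = 1 - measure M {G. \<not> terminated G0 G}"
      unfolding M_def by (rule measure_pmf.prob_compl) simp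
    finally show ?thesis .
  qed
  ultimately show ?thesis unfolding T_def by linarith
qed

lemma pmf_node_step_unique_middle:
  assumes fin: "finite G" and xw: "x \<noteq> w" and v0: "v0 \<in> out_nbrs G x"
    and unique: "\<And>v. v \<in> out_nbrs G x \<Longrightarrow> w \<in> out_nbrs G v \<Longrightarrow> v = v0"
  shows "pmf (node_step G x) (Some (x, w)) \<le> 1 / (real (card (out_nbrs G x)) * real (card (out_nbrs G v0)))"
proof -
  let ?N = "out_nbrs G"
  have "(\<Sum>v\<in>?N x. if w \<in> ?N v then 1 / real (card (?N v)) else 0)
      \<le> (\<Sum>v\<in>?N x. if v = v0 then 1 / real (card (?N v0)) else 0)"
  proof (intro sum_mono)
    fix v assume "v \<in> ?N x"
    thus "(if w \<in> ?N v then 1 / real (card (?N v)) else 0) \<le> (if v = v0 then 1 / real (card (?N v0)) else 0)"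
      using unique[of v] by (cases "w \<in> ?N v") simp_all
  qed
  also have "\<dots> = 1 / real (card (?N v0))" using v0 finite_out_nbrs[OF fin] by simp
  finally have "(\<Sum>v\<in>?N x. if w \<in> ?N v then 1 / real (card (?N v)) else 0) / real (card (?N x))
      \<le> (1 / real (card (?N v0))) / real (card (?N x))"
    by (intro divide_right_mono) auto
  thus ?thesis using pmf_node_step_arc[OF fin xw] v0 by (auto simp: mult.commute)
qed

lemma round_step_new_arc:
  assumes fin: "finite G" and \<sigma>: "\<forall>y<n. \<sigma> y \<in> set_pmf (node_step G y)"
    and new: "(x, w) \<in> G \<union> {a. \<exists>y<n. \<sigma> y = Some a}" "(x, w) \<notin> G"
  shows "\<sigma> x = Some (x, w)"
proof -
  obtain y where "y < n" "\<sigma> y = Some (x, w)" using new by blast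
  moreover from this have "y = x" using node_step_proposes_two_hop[OF fin, of "(x, w)" y] \<sigma> by auto
  ultimately show ?thesis by simp
qed

lemma nn_integral_reciprocal_drift:
  fixes K :: nat and K' :: "'a \<Rightarrow> nat"
  assumes drop: "\<And>\<sigma>. \<sigma> \<in> set_pmf P \<Longrightarrow> K \<le> K' \<sigma> + (if \<sigma> \<in> E then 1 else 0)"
    and event: "measure_pmf.prob P E \<le> real K * q" and q: "q \<ge> 0"
  shows "(\<integral>\<^sup>+\<sigma>. ennreal (1 / (real (K' \<sigma>) + 1)) \<partial>P) \<le> ennreal ((1 + q) / (real K + 1))"
proof (cases "K = 0")
  case True
  have "(\<integral>\<^sup>+\<sigma>. ennreal (1 / (real (K' \<sigma>) + 1)) \<partial>P) \<le> (\<integral>\<^sup>+\<sigma>. 1 \<partial>P)"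
    by (intro nn_integral_mono) (auto simp: divide_le_eq)
  also have "\<dots> \<le> ennreal (1 + q)" using q by (simp add: measure_pmf.emeasure_space_1)
  finally show ?thesis using True by simp
next
  case False
  define c where "c = 1 / (real K * (real K + 1))"
  have "1 / real K - 1 / (real K + 1) = c" using False by (simp add: c_def diff_frac_eq)
  hence c: "c \<ge> 0" "c * real K = 1 / (real K + 1)" "1 / real K = 1 / (real K + 1) + c"
    using False by (auto simp: c_def)
  have "(\<integral>\<^sup>+\<sigma>. ennreal (1 / (real (K' \<sigma>) + 1)) \<partial>P)
      \<le> (\<integral>\<^sup>+\<sigma>. ennreal (1 / (real K + 1)) + ennreal c * indicator E \<sigma> \<partial>P)"
  proof (intro nn_integral_mono_AE, unfold AE_measure_pmf_iff, intro ballI)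
    fix \<sigma> assume "\<sigma> \<in> set_pmf P"
    note drop_\<sigma> = drop[OF this]
    show "ennreal (1 / (real (K' \<sigma>) + 1)) \<le> ennreal (1 / (real K + 1)) + ennreal c * indicator E \<sigma>"
    proof (cases "\<sigma> \<in> E")
      case True
      hence "1 / (real (K' \<sigma>) + 1) \<le> 1 / real K"
        using drop_\<sigma> False by (intro divide_left_mono) auto
      thus ?thesis using True c by (simp flip: ennreal_plus)
    next
      case False
      hence "1 / (real (K' \<sigma>) + 1) \<le> 1 / (real K + 1)" using drop_\<sigma> by (intro divide_left_mono) auto
      thus ?thesis using False by (simp add: ennreal_leI)
    qed
  qed
  also have "\<dots> = ennreal (1 / (real K + 1)) + ennreal c * ennreal (measure_pmf.prob P E)"
    by (simp add: nn_integral_add nn_integral_cmult_indicator measure_pmf.emeasure_eq_measure)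
  also have "\<dots> = ennreal (1 / (real K + 1) + c * measure_pmf.prob P E)"
    using c(1) by (simp add: ennreal_plus ennreal_mult)
  also have "\<dots> \<le> ennreal (1 / (real K + 1) + c * (real K * q))"
    using c(1) event by (intro ennreal_leI add_left_mono mult_left_mono)
  also have "c * (real K * q) = q * (1 / (real K + 1))"
    by (metis c(2) mult.assoc mult.commute)
  also have "1 / (real K + 1) + q * (1 / (real K + 1)) = (1 + q) / (real K + 1)"
    by (simp add: add_divide_distrib)
  finally show ?thesis .
qed

(* The slow instance on n = 3m + 1 nodes: a root 0, middle nodes a_i = i + 1, private targets
   b_i = m + i + 1 with a_i \<rightarrow> b_i, and shared targets c_j = 2m + j + 1 with a_i \<rightarrow> c_j for all i, j.
   To terminate, the root must learn every arc 0 \<rightarrow> b_i; only the root proposes it, and only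
   through a_i, whose out-degree is m + 1. *)
definition hub_graph :: "nat \<Rightarrow> (nat \<times> nat) set" where
  "hub_graph m = {(0, Suc i) | i. i < m} \<union> {(Suc i, Suc (m + i)) | i. i < m}
      \<union> {(Suc i, Suc (2 * m + j)) | i j. i < m \<and> j < m}"

(* Its transitive closure: hub_graph m together with all arcs from the root. *)
definition hub_closure :: "nat \<Rightarrow> (nat \<times> nat) set" where
  "hub_closure m = hub_graph m \<union> {(0, Suc (m + i)) | i. i < m} \<union> {(0, Suc (2 * m + j)) | j. j < m}"

lemma hub_graph_trancl_subset: "(hub_graph m)\<^sup>+ \<subseteq> hub_closure m"
proof (rule subrelI)
  fix a b assume "(a, b) \<in> (hub_graph m)\<^sup>+"
  thus "(a, b) \<in> hub_closure m"
    by (induction rule: trancl_induct) (auto simp: hub_closure_def hub_graph_def)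
qed

lemma hub_closure_square: "hub_closure m \<subseteq> {..<3 * m + 1} \<times> {..<3 * m + 1}"
  by (auto simp: hub_closure_def hub_graph_def)

lemma hub_graph_digraph: "digraph_on (3 * m + 1) (hub_graph m)"
  unfolding digraph_on_def hub_graph_def by auto

(* Every node is joined to the root by an undirected path of length at most two. *)
lemma hub_graph_weakly_connected:
  assumes m: "m \<ge> 1"
  shows "weakly_connected_on (3 * m + 1) (hub_graph m)"
proof -
  define E where "E = hub_graph m \<union> (hub_graph m)\<inverse>"
  have root_arc: "(0, Suc i) \<in> E" if "i < m" for i
    using that unfolding E_def hub_graph_def by auto
  have middle_arc: "(Suc i, Suc (m + i)) \<in> E" "(Suc i, Suc (2 * m + j)) \<in> E" if "i < m" "j < m" for i j
    using that unfolding E_def hub_graph_def by auto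
  have from_root: "(0, k) \<in> E\<^sup>*" if "k < 3 * m + 1" for k
  proof (cases k)
    case (Suc l)
    consider "l < m" | "m \<le> l" "l < 2 * m" | "2 * m \<le> l" by linarith
    thus ?thesis
    proof cases
      case 1 thus ?thesis using root_arc[of l] Suc by simp
    next
      case 2
      hence "k = Suc (m + (l - m))" "l - m < m" using Suc by auto
      thus ?thesis using root_arc middle_arc(1) by (meson r_into_rtrancl rtrancl_into_rtrancl)
    next
      case 3
      hence "k = Suc (2 * m + (l - 2 * m))" "l - 2 * m < m" using Suc that by auto
      moreover have "0 < m" using m by simp
      ultimately show ?thesis using root_arc middle_arc(2) by (meson r_into_rtrancl rtrancl_into_rtrancl)
    qed
  qed simp
  have "E\<inverse> = E" unfolding E_def by auto
  hence to_root: "(k, 0) \<in> E\<^sup>*" if "k < 3 * m + 1" for k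
    using rtrancl_converseI[OF from_root[OF that]] by simp
  show ?thesis
    unfolding weakly_connected_on_def E_def[symmetric] using to_root from_root by (meson rtrancl_trans)
qed

(* In any intermediate graph, the root proposes the private arc (0, b_i) with probability at most
   1/(m (m + 1)): its out-degree is at least m and the only route is through a_i. *)
lemma pmf_root_private_arc:
  assumes m: "m \<ge> 1" and G: "hub_graph m \<subseteq> G" "G \<subseteq> hub_closure m" and i: "i < m"
  shows "pmf (node_step G 0) (Some (0, Suc (m + i))) \<le> 1 / (real m * (real m + 1))"
proof -
  have fin: "finite G" using G(2) hub_closure_square by (blast intro: finite_square_subset)
  let ?N = "out_nbrs G"
  have "Suc ` {..<m} \<subseteq> ?N 0" using G(1) by (auto simp: out_nbrs_def hub_graph_def)
  from card_mono[OF finite_out_nbrs[OF fin] this] have deg_root: "m \<le> card (?N 0)"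
    by (simp add: card_image)
  have targets: "insert (Suc (m + i)) ((\<lambda>j. Suc (2 * m + j)) ` {..<m}) \<subseteq> ?N (Suc i)"
    using G(1) i by (auto simp: out_nbrs_def hub_graph_def)
  have "card (insert (Suc (m + i)) ((\<lambda>j. Suc (2 * m + j)) ` {..<m})) = m + 1"
    using i by (subst card_insert_disjoint) (auto simp: card_image inj_on_def)
  hence deg_middle: "m + 1 \<le> card (?N (Suc i))"
    using card_mono[OF finite_out_nbrs[OF fin] targets] by simp
  have "pmf (node_step G 0) (Some (0, Suc (m + i))) \<le> 1 / (real (card (?N 0)) * real (card (?N (Suc i))))"
  proof (rule pmf_node_step_unique_middle[OF fin])
    show "Suc i \<in> ?N 0" using G(1) i by (auto simp: out_nbrs_def hub_graph_def)
    show "v = Suc i" if "v \<in> ?N 0" "Suc (m + i) \<in> ?N v" for v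
    proof -
      have "(0, v) \<in> hub_closure m" "(v, Suc (m + i)) \<in> hub_closure m"
        using that G(2) by (auto simp: out_nbrs_def)
      thus ?thesis using i by (auto simp: hub_closure_def hub_graph_def)
    qed
  qed simp
  also have "\<dots> \<le> 1 / (real m * (real m + 1))"
    using deg_root deg_middle m by (intro divide_left_mono mult_mono) auto
  finally show ?thesis .
qed

definition missing_private :: "nat \<Rightarrow> (nat \<times> nat) set \<Rightarrow> nat" where
  "missing_private m G = card {i. i < m \<and> (0, Suc (m + i)) \<notin> G}"

(* In one round the number of missing private arcs drops by at most one, and only if the root's
   own proposal is one of them (an arc is only ever proposed by its tail). *)
lemma missing_private_round_drop:
  fixes m :: nat
  assumes fin: "finite G" and \<sigma>: "\<forall>x<n. \<sigma> x \<in> set_pmf (node_step G x)"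
  defines "Miss \<equiv> {i. i < m \<and> (0, Suc (m + i)) \<notin> G}"
  shows "card Miss \<le> missing_private m (G \<union> {a. \<exists>x<n. \<sigma> x = Some a})
           + (if \<sigma> 0 \<in> (\<lambda>i. Some (0, Suc (m + i))) ` Miss then 1 else 0)"
proof -
  let ?hit = "{i. \<sigma> 0 = Some (0, Suc (m + i))}"
  have "finite Miss" by (simp add: Miss_def)
  have "Miss - ?hit \<subseteq> {i. i < m \<and> (0, Suc (m + i)) \<notin> G \<union> {a. \<exists>x<n. \<sigma> x = Some a}}"
    using round_step_new_arc[OF fin \<sigma>] by (auto simp: Miss_def)
  hence "card (Miss - ?hit) \<le> missing_private m (G \<union> {a. \<exists>x<n. \<sigma> x = Some a})"
    unfolding missing_private_def by (intro card_mono) auto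
  moreover have "card Miss \<le> card (Miss - ?hit) + (if \<sigma> 0 \<in> (\<lambda>i. Some (0, Suc (m + i))) ` Miss then 1 else 0)"
  proof (cases "\<sigma> 0 \<in> (\<lambda>i. Some (0, Suc (m + i))) ` Miss")
    case True
    then obtain i0 where "\<sigma> 0 = Some (0, Suc (m + i0))" by auto
    hence "?hit = {i0}" by auto
    thus ?thesis using True \<open>finite Miss\<close> by (auto simp: card_Diff_singleton_if)
  next
    case False
    hence "Miss - ?hit = Miss" by auto
    thus ?thesis by simp
  qed
  ultimately show ?thesis by linarith
qed

(* Key drift (lower bound): one round raises E[1/(missing + 1)] by at most the factor
   1 + 1/(m (m + 1)), since at most one private arc is added per round (only the root proposes
   them), and that happens with probability at most missing/(m (m + 1)). *)
lemma missing_private_drift: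
  assumes m: "m \<ge> 1" and G: "hub_graph m \<subseteq> G" "G \<subseteq> (hub_graph m)\<^sup>+"
  shows "(\<integral>\<^sup>+G'. ennreal (1 / (real (missing_private m G') + 1)) \<partial>round_step (3 * m + 1) G)
    \<le> ennreal (1 + 1 / (real m * (real m + 1))) * ennreal (1 / (real (missing_private m G) + 1))"
proof -
  define n where "n = 3 * m + 1"
  define q where "q = 1 / (real m * (real m + 1))"
  have GC: "G \<subseteq> hub_closure m" using G(2) hub_graph_trancl_subset by blast
  hence fin: "finite G" using hub_closure_square by (blast intro: finite_square_subset)
  define P where "P = Pi_pmf {..<n} None (node_step G)"
  define Gs where "Gs = (\<lambda>\<sigma>. G \<union> {a. \<exists>x<n. \<sigma> x = Some a})"
  define Miss where "Miss = {i. i < m \<and> (0, Suc (m + i)) \<notin> G}"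
  define E :: "(nat \<Rightarrow> (nat \<times> nat) option) set" where "E = {\<sigma>. \<sigma> 0 \<in> (\<lambda>i. Some (0, Suc (m + i))) ` Miss}"
  have "finite Miss" by (simp add: Miss_def)
  have drop: "card Miss \<le> missing_private m (Gs \<sigma>) + (if \<sigma> \<in> E then 1 else 0)"
    if "\<sigma> \<in> set_pmf P" for \<sigma>
  proof -
    have "\<forall>x<n. \<sigma> x \<in> set_pmf (node_step G x)"
      using that by (auto simp: P_def set_Pi_pmf PiE_dflt_def)
    from missing_private_round_drop[OF fin this, of m] show ?thesis
      by (simp add: E_def Gs_def Miss_def missing_private_def)
  qed
  have "emeasure (measure_pmf P) E = emeasure (measure_pmf (node_step G 0)) ((\<lambda>i. Some (0, Suc (m + i))) ` Miss)"
    unfolding P_def E_def by (rule emeasure_Pi_pmf_coordinate) (auto simp: n_def)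
  also have "\<dots> = ennreal (\<Sum>i\<in>Miss. pmf (node_step G 0) (Some (0, Suc (m + i))))"
    using \<open>finite Miss\<close> by (simp add: emeasure_measure_pmf_finite sum_ennreal sum.reindex inj_on_def)
  also have "\<dots> \<le> ennreal (\<Sum>i\<in>Miss. q)"
    using pmf_root_private_arc[OF m G(1) GC] by (intro ennreal_leI sum_mono) (simp add: Miss_def q_def)
  also have "\<dots> = ennreal (real (card Miss) * q)" by simp
  finally have event: "measure_pmf.prob P E \<le> real (card Miss) * q"
    by (simp add: measure_pmf.emeasure_eq_measure q_def ennreal_le_iff)
  have "(\<integral>\<^sup>+G'. ennreal (1 / (real (missing_private m G') + 1)) \<partial>round_step n G)
      = (\<integral>\<^sup>+\<sigma>. ennreal (1 / (real (missing_private m (Gs \<sigma>)) + 1)) \<partial>P)"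
    by (simp add: round_step_def P_def Gs_def)
  also have "\<dots> \<le> ennreal ((1 + q) / (real (card Miss) + 1))"
    using drop event by (intro nn_integral_reciprocal_drift) (auto simp: q_def)
  also have "(1 + q) / (real (card Miss) + 1) = (1 + q) * (1 / (real (missing_private m G) + 1))"
    by (simp add: missing_private_def Miss_def)
  also have "ennreal \<dots> = ennreal (1 + q) * ennreal (1 / (real (missing_private m G) + 1))"
    by (rule ennreal_mult) (auto simp: q_def)
  finally show ?thesis unfolding n_def q_def .
qed

(* Termination forces missing_private = 0, i.e. potential 1, while the initial potential is
   1/(m + 1); by the drift bound, P(terminated at T) \<le> (1 + 1/(m (m + 1)))^T / (m + 1). *)
lemma hub_termination_bound:
  assumes m: "m \<ge> 1"
  shows "term_prob (3 * m + 1) (hub_graph m) T \<le> (1 + 1 / (real m * (real m + 1))) ^ T / (real m + 1)"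
proof -
  define q where "q = 1 / (real m * (real m + 1))"
  define \<Phi> where "\<Phi> = (\<lambda>G. ennreal (1 / (real (missing_private m G) + 1)))"
  define M where "M = measure_pmf (two_hop (3 * m + 1) (hub_graph m) T)"
  have q: "q \<ge> 0" unfolding q_def by simp
  have fin: "finite (hub_graph m)" by (rule digraph_on_finite[OF hub_graph_digraph])
  have initial: "missing_private m (hub_graph m) = m"
  proof -
    have "{i. i < m \<and> (0, Suc (m + i)) \<notin> hub_graph m} = {..<m}" by (auto simp: hub_graph_def)
    thus ?thesis unfolding missing_private_def by simp
  qed
  have terminated_le: "indicator {G. terminated (hub_graph m) G} G \<le> \<Phi> G" for G
  proof (cases "terminated (hub_graph m) G")
    case True
    have "(0, Suc (m + i)) \<in> G" if "i < m" for i
    proof -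
      have "(0, Suc i) \<in> hub_graph m" "(Suc i, Suc (m + i)) \<in> hub_graph m"
        using that by (auto simp: hub_graph_def)
      hence "(0, Suc (m + i)) \<in> (hub_graph m)\<^sup>+" by (meson trancl.intros)
      thus ?thesis using True unfolding terminated_def by blast
    qed
    hence "missing_private m G = 0" unfolding missing_private_def by auto
    thus ?thesis using True by (simp add: \<Phi>_def)
  qed simp
  have "emeasure M {G. terminated (hub_graph m) G} \<le> (\<integral>\<^sup>+G. \<Phi> G \<partial>M)"
    unfolding M_def using terminated_le by (simp add: nn_integral_mono flip: nn_integral_indicator)
  also have "\<dots> \<le> ennreal (1 + q) ^ T * \<Phi> (hub_graph m)"
    unfolding M_def \<Phi>_def q_def by (rule two_hop_drift[OF fin missing_private_drift[OF m]])
  also have "\<dots> = ennreal ((1 + q) ^ T) * ennreal (1 / (real m + 1))"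
    unfolding \<Phi>_def initial using q by (subst ennreal_power) auto
  also have "\<dots> = ennreal ((1 + q) ^ T / (real m + 1))"
    using q by (subst ennreal_mult[symmetric]) auto
  finally show ?thesis
    using q by (simp add: term_prob_def M_def q_def measure_pmf.emeasure_eq_measure ennreal_le_iff)
qed

(* Numerical estimate: with n = 3m + 1 and T = \<lfloor>n\<^sup>2 ln n / 32\<rfloor>, the bound above is at most
   3/\<surd>n, because (1 + 1/(m (m + 1)))^T \<le> exp(T/(m (m + 1))) \<le> \<surd>n. *)
lemma hub_bound_small:
  assumes m: "m \<ge> 1"
  shows "(1 + 1 / (real m * (real m + 1))) ^ (nat \<lfloor>1 / 32 * real (3 * m + 1) ^ 2 * ln (real (3 * m + 1))\<rfloor>)
           / (real m + 1) \<le> 3 / sqrt (real (3 * m + 1))"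
proof -
  define n where "n = real (3 * m + 1)"
  define q where "q = 1 / (real m * (real m + 1))"
  define T where "T = nat \<lfloor>1 / 32 * n ^ 2 * ln n\<rfloor>"
  have n: "n \<ge> 1" "ln n \<ge> 0" unfolding n_def by simp_all
  have q: "q \<ge> 0" unfolding q_def by simp
  have T: "real T \<le> 1 / 32 * n ^ 2 * ln n"
  proof -
    have "0 \<le> 1 / 32 * n ^ 2 * ln n" using n by simp
    thus ?thesis unfolding T_def by linarith
  qed
  have "1 \<le> real m * 10 + real m * (real m * 7)" using m by (simp add: add_increasing2)
  hence "n ^ 2 \<le> 16 * (real m * (real m + 1))" unfolding n_def by (simp add: power2_eq_square algebra_simps)
  hence "q * n ^ 2 \<le> 16" using m unfolding q_def by (simp add: divide_le_eq mult.commute)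
  have "(1 + q) ^ T \<le> exp q ^ T" using q by (intro power_mono) (auto simp: add.commute exp_ge_add_one_self)
  also have "\<dots> = exp (q * real T)" by (simp add: exp_of_nat_mult[symmetric] mult.commute)
  also have "\<dots> \<le> exp (ln n / 2)"
  proof -
    have "q * real T \<le> q * (1 / 32 * n ^ 2 * ln n)" using T q by (rule mult_left_mono)
    also have "\<dots> = (q * n ^ 2) * ln n / 32" by simp
    also have "\<dots> \<le> 16 * ln n / 32" using \<open>q * n ^ 2 \<le> 16\<close> n by (intro divide_right_mono mult_right_mono) auto
    finally show ?thesis by simp
  qed
  also have "\<dots> = sqrt n" using n by (simp add: ln_sqrt[symmetric])
  finally have "(1 + q) ^ T / (real m + 1) \<le> sqrt n / (real m + 1)" by (intro divide_right_mono) auto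
  also have "\<dots> \<le> 3 / sqrt n"
  proof -
    have "sqrt n * sqrt n \<le> 3 * (real m + 1)" using n unfolding n_def by simp
    thus ?thesis using n by (simp add: field_simps)
  qed
  finally show ?thesis unfolding n_def q_def T_def by simp
qed

lemma three_div_sqrt_less:
  fixes \<epsilon> :: real
  assumes e: "\<epsilon> > 0" and n: "9 / \<epsilon> ^ 2 < real n"
  shows "3 / sqrt (real n) < \<epsilon>"
proof -
  have "3 / \<epsilon> = sqrt (9 / \<epsilon> ^ 2)" using e by (simp add: real_sqrt_divide)
  also have "\<dots> < sqrt (real n)" using n by (rule real_sqrt_less_mono)
  finally have "3 < \<epsilon> * sqrt (real n)" using e by (simp add: divide_less_eq mult.commute)
  moreover have "sqrt (real n) > 0"
  proof -
    have "0 \<le> 9 / \<epsilon> ^ 2" by simp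
    hence "0 < real n" using n by linarith
    thus ?thesis by simp
  qed
  ultimately show ?thesis by (simp add: divide_less_eq mult.commute)
qed

lemma upper_bound:
  "\<exists>C C' :: real. C > 0 \<and> C' > 0 \<and> (\<forall>n G0. n \<ge> 2 \<longrightarrow> digraph_on n G0 \<longrightarrow>
     term_prob n G0 (nat \<lceil>C * real n ^ 2 * ln (real n)\<rceil>) \<ge> 1 - C' / real n)"
  by (intro exI[of _ 10] exI[of _ 1]) (auto intro: termination_whp)

lemma lower_bound:
  "\<exists>c :: real. c > 0 \<and> (\<exists>N :: nat set. \<exists>Gs :: nat \<Rightarrow> (nat \<times> nat) set. infinite N \<and>
     (\<forall>n\<in>N. digraph_on n (Gs n) \<and> weakly_connected_on n (Gs n)) \<and>
     (\<forall>\<epsilon>>0. \<exists>N0. \<forall>n\<in>N. n \<ge> N0 \<longrightarrow> term_prob n (Gs n) (nat \<lfloor>c * real n ^ 2 * ln (real n)\<rfloor>) < \<epsilon>))"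
proof (intro exI conjI)
  define N :: "nat set" where "N = (\<lambda>m. 3 * m + 1) ` {1..}"
  define Gs where "Gs = (\<lambda>n. hub_graph ((n - 1) div 3))"
  have hub: "\<exists>m\<ge>1. n = 3 * m + 1 \<and> Gs n = hub_graph m" if "n \<in> N" for n :: nat
    using that unfolding N_def Gs_def by auto
  show "infinite N"
  proof
    assume "finite N"
    hence "finite {1::nat..}" unfolding N_def by (rule finite_imageD) (simp add: inj_on_def)
    thus False using infinite_Ici by blast
  qed
  show "\<forall>n\<in>N. digraph_on n (Gs n) \<and> weakly_connected_on n (Gs n)"
  proof
    fix n assume "n \<in> N"
    then obtain m where "m \<ge> 1" "n = 3 * m + 1" "Gs n = hub_graph m" using hub by blast
    thus "digraph_on n (Gs n) \<and> weakly_connected_on n (Gs n)"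
      using hub_graph_digraph hub_graph_weakly_connected by simp
  qed
  show "\<forall>\<epsilon>>0. \<exists>N0. \<forall>n\<in>N. n \<ge> N0 \<longrightarrow> term_prob n (Gs n) (nat \<lfloor>1 / 32 * real n ^ 2 * ln (real n)\<rfloor>) < \<epsilon>"
  proof (intro allI impI)
    fix \<epsilon> :: real assume e: "\<epsilon> > 0"
    show "\<exists>N0. \<forall>n\<in>N. n \<ge> N0 \<longrightarrow> term_prob n (Gs n) (nat \<lfloor>1 / 32 * real n ^ 2 * ln (real n)\<rfloor>) < \<epsilon>"
    proof (intro exI[of _ "nat \<lceil>9 / \<epsilon> ^ 2\<rceil> + 1"] ballI impI)
      fix n assume "n \<in> N" and large: "nat \<lceil>9 / \<epsilon> ^ 2\<rceil> + 1 \<le> n"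
      then obtain m where m: "m \<ge> 1" "n = 3 * m + 1" "Gs n = hub_graph m" using hub by blast
      have "term_prob n (Gs n) (nat \<lfloor>1 / 32 * real n ^ 2 * ln (real n)\<rfloor>) \<le> 3 / sqrt (real n)"
        unfolding m(3) unfolding m(2) by (rule order_trans[OF hub_termination_bound[OF m(1)] hub_bound_small[OF m(1)]])
      also have "\<dots> < \<epsilon>" using large by (intro three_div_sqrt_less[OF e]) linarith
      finally show "term_prob n (Gs n) (nat \<lfloor>1 / 32 * real n ^ 2 * ln (real n)\<rfloor>) < \<epsilon>" .
    qed
  qed
qed simp

theorem theorem14:
  shows "(\<exists>C C' :: real. C > 0 \<and> C' > 0 \<and>
            (\<forall>n G0. n \<ge> 2 \<longrightarrow> digraph_on n G0 \<longrightarrow>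
               term_prob n G0 (nat \<lceil>C * real n ^ 2 * ln (real n)\<rceil>) \<ge> 1 - C' / real n))
       \<and> (\<exists>c :: real. c > 0 \<and>
            (\<exists>N :: nat set. \<exists>Gs :: nat \<Rightarrow> (nat \<times> nat) set. infinite N \<and>
               (\<forall>n\<in>N. digraph_on n (Gs n) \<and> weakly_connected_on n (Gs n)) \<and>
               (\<forall>\<epsilon>>0. \<exists>N0. \<forall>n\<in>N. n \<ge> N0 \<longrightarrow>
                  term_prob n (Gs n) (nat \<lfloor>c * real n ^ 2 * ln (real n)\<rfloor>) < \<epsilon>)))"
  using upper_bound lower_bound by (rule conjI)

end
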